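(* Let $T_n$ be the random variable $\operatorname{des}(w)+\operatorname{des}(w^{-1})$ for $w$ uniform in the Coxeter group of type $\mathrm{A}_n$ (i.e. $\operatorname{Sym}(n+1)$), $n\ge 3$. Then $$\mathbb{E}\big((T_n-\mathbb{E}(T_n))^4\big)=\frac{1}{60}\left(5n^2+79n+258\right)-\frac{5n+2}{n(n+1)}.$$
   Context: $\operatorname{des}(w)=|\{s\in S: l_S(ws)<l_S(w)\}|$ with $S$ the adjacent transpositions and $l_S$ the word length. *)

theory Defs
  imports "HOL-Probability.Probability" "HOL-Combinatorics.Permutations"
begin

text \<open>Type A_n: the symmetric group Sym(n+1), realised as permutations of {0..n}.
  Simple generators S: adjacent transpositions s_i = (i i+1), i < n.\<close>

definition adj_trans :: "nat \<Rightarrow> nat \<Rightarrow> nat" where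
  "adj_trans i = Transposition.transpose i (Suc i)"

definition gen_word :: "nat list \<Rightarrow> nat \<Rightarrow> nat" where
  "gen_word is = foldr (\<lambda>i f. adj_trans i \<circ> f) is id"

definition word_length :: "nat \<Rightarrow> (nat \<Rightarrow> nat) \<Rightarrow> nat" where
  "word_length n w = (LEAST k. \<exists>is. length is = k \<and> set is \<subseteq> {..<n} \<and> w = gen_word is)"

definition des :: "nat \<Rightarrow> (nat \<Rightarrow> nat) \<Rightarrow> nat" where
  "des n w = card {i \<in> {..<n}. word_length n (w \<circ> adj_trans i) < word_length n w}"

definition T_stat :: "nat \<Rightarrow> (nat \<Rightarrow> nat) \<Rightarrow> real" where
  "T_stat n w = real (des n w + des n (inv w))"

definition unif_A :: "nat \<Rightarrow> (nat \<Rightarrow> nat) pmf" where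
  "unif_A n = pmf_of_set {w. w permutes {0..n}}"

end

theory Submission
  imports Defs "HOL-Combinatorics.Multiset_Permutations"
begin

text \<open>In one-line notation \<open>L = [w 0, \<dots>, w n]\<close>, \<open>des w\<close> is the number of descents of \<open>L\<close> and
  \<open>des (w\<^sup>-\<^sup>1)\<close> the number of \<open>j\<close> such that \<open>j + 1\<close> occurs before \<open>j\<close> in \<open>L\<close>. Inserting the
  largest value into a list gives a recurrence for sums of \<open>f (descents L)\<close> over all permutation
  lists, hence the first four moments of the descent number as polynomials in the length.
  Joint moments with inverse descents reduce to these: swapping the values \<open>m\<close> and \<open>m + 1\<close>
  changes the descent number only when they are adjacent, and the lists in which they are adjacent
  arise from shorter lists by splitting one value in two. This expresses the sums of
  \<open>f (descents L)\<close> weighted by one or two inverse descents through descent sums of \<open>f\<close> and of its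
  finite differences. Since \<open>w \<mapsto> w\<^sup>-\<^sup>1\<close> exchanges the two statistics, the fourth central moment
  of their sum only involves terms at most quadratic in the inverse descents.\<close>

section \<open>Descents of permutation lists\<close>

abbreviation perm_lists :: "nat \<Rightarrow> nat list set" where
  "perm_lists N \<equiv> permutations_of_set {0..<N}"

lemma perm_lists_iff: "L \<in> perm_lists N \<longleftrightarrow> distinct L \<and> set L = {0..<N}"
  by (auto simp: permutations_of_set_def)

lemma length_perm_lists: "L \<in> perm_lists N \<Longrightarrow> length L = N"
  by (metis perm_lists_iff atLeastLessThan_upt card_atLeastLessThan diff_zero distinct_card)

fun descents :: "nat list \<Rightarrow> nat" where
  "descents (x # y # zs) = of_bool (y < x) + descents (y # zs)"
| "descents _ = 0"

lemma descents_Cons: "descents (x # ys) = descents ys + of_bool (ys \<noteq> [] \<and> hd ys < x)"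
  by (cases ys) auto

lemma descents_append:
  "descents (xs @ ys) = descents xs + descents ys + of_bool (xs \<noteq> [] \<and> ys \<noteq> [] \<and> hd ys < last xs)"
proof (induction xs)
  case (Cons x xs)
  then show ?case by (cases xs) (auto simp: descents_Cons)
qed simp

lemma descents_conv_sum: "descents L = (\<Sum>i<length L - 1. of_bool (L ! Suc i < L ! i))"
proof (induction L rule: descents.induct)
  case (1 x y zs)
  then show ?case by (simp add: sum.lessThan_Suc_shift del: sum.lessThan_Suc)
qed auto

lemma descents_map_strict_mono: "strict_mono f \<Longrightarrow> descents (map f L) = descents L"
  by (induction L rule: descents.induct) (auto simp: strict_mono_less)

definition insert_at :: "nat \<Rightarrow> 'a \<Rightarrow> 'a list \<Rightarrow> 'a list" where
  "insert_at s x L = take s L @ x # drop s L"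

lemma descents_insert_at_max:
  assumes "\<forall>y\<in>set L. y < x" "s \<le> length L"
  shows "descents (insert_at s x L) + of_bool (0 < s \<and> s < length L \<and> L ! s < L ! (s - 1))
       = descents L + of_bool (s < length L)"
proof -
  have no_desc_before: "\<not> (take s L \<noteq> [] \<and> x < last (take s L))"
    using assms(1) by (metis in_set_takeD last_in_set not_less_iff_gr_or_eq)
  have "drop s L \<noteq> [] \<Longrightarrow> hd (drop s L) < x"
    using assms(1) by (metis hd_in_set in_set_dropD)
  then have desc_after: "descents (x # drop s L) = descents (drop s L) + of_bool (s < length L)"
    by (simp add: descents_Cons)
  have "0 < s \<Longrightarrow> last (take s L) = L ! (s - 1)"
    using assms(2) by (subst last_conv_nth) (auto simp: min_def)
  then have slot: "(take s L \<noteq> [] \<and> drop s L \<noteq> [] \<and> hd (drop s L) < last (take s L))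
      \<longleftrightarrow> (0 < s \<and> s < length L \<and> L ! s < L ! (s - 1))"
    using assms(2) by (auto simp: hd_drop_conv_nth)
  have "descents L = descents (take s L @ drop s L)" by simp
  then show ?thesis
    unfolding insert_at_def descents_append[of "take s L"] using no_desc_before desc_after slot
    by simp
qed

lemma sum_descent_slots:
  "(\<Sum>s\<le>length L. of_bool (0 < s \<and> s < length L \<and> L ! s < L ! (s - 1))) = descents L"
proof (cases "length L")
  case (Suc m)
  have "(\<Sum>s\<le>length L. of_bool (0 < s \<and> s < length L \<and> L ! s < L ! (s - 1)))
      = (\<Sum>i<m. of_bool (L ! Suc i < L ! i) :: nat)"
    unfolding Suc by (subst sum.atMost_Suc_shift) (simp add: lessThan_Suc_atMost[symmetric])
  then show ?thesis unfolding descents_conv_sum Suc by simp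
qed simp

lemma sum_descents_insert_at_max:
  fixes f :: "nat \<Rightarrow> real"
  assumes "\<forall>y\<in>set L. y < x"
  shows "(\<Sum>s\<le>length L. f (descents (insert_at s x L)))
       = real (descents L + 1) * f (descents L)
         + (real (length L) - real (descents L)) * f (descents L + 1)"
proof -
  define a where "a s = (of_bool (s < length L) :: nat)" for s
  define b where "b s = (of_bool (0 < s \<and> s < length L \<and> L ! s < L ! (s - 1)) :: nat)" for s
  have "f (descents (insert_at s x L))
      = f (descents L) + (real (a s) - real (b s)) * (f (descents L + 1) - f (descents L))"
    if "s \<le> length L" for s
    using descents_insert_at_max[OF assms that] unfolding a_def b_def by (auto split: if_splits)
  then have "(\<Sum>s\<le>length L. f (descents (insert_at s x L)))
      = real (Suc (length L)) * f (descents L)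
        + (real (\<Sum>s\<le>length L. a s) - real (\<Sum>s\<le>length L. b s))
          * (f (descents L + 1) - f (descents L))"
    by (simp add: sum.distrib sum_subtractf sum_distrib_right[symmetric])
  moreover have "(\<Sum>s\<le>length L. a s) = length L"
    unfolding a_def lessThan_Suc_atMost[symmetric] by (simp add: sum.lessThan_Suc)
  moreover have "(\<Sum>s\<le>length L. b s) = descents L"
    unfolding b_def by (rule sum_descent_slots)
  ultimately show ?thesis by (simp add: algebra_simps)
qed

lemma insert_at_perm_lists:
  assumes "L \<in> perm_lists N" "s \<le> N"
  shows "insert_at s N L \<in> perm_lists (Suc N)"
proof -
  have "set (insert_at s N L) = insert N (set L)"
    unfolding insert_at_def by (metis Un_insert_right append_take_drop_id list.simps(15) set_append)
  moreover have "distinct (insert_at s N L)"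
  proof -
    have "distinct (take s L @ drop s L)" "N \<notin> set L" using assms(1) by (auto simp: perm_lists_iff)
    then show ?thesis unfolding insert_at_def
      by (auto dest: in_set_takeD in_set_dropD simp del: append_take_drop_id)
  qed
  ultimately show ?thesis using assms(1) by (auto simp: perm_lists_iff)
qed

lemma insert_at_max_inj:
  assumes "L \<in> perm_lists N" "L' \<in> perm_lists N" "s \<le> N" "s' \<le> N"
    and "insert_at s N L = insert_at s' N L'"
  shows "L = L' \<and> s = s'"
proof -
  have "filter (\<lambda>y. y \<noteq> N) (insert_at s N M) = M"
    and "length (takeWhile (\<lambda>y. y \<noteq> N) (insert_at s N M)) = s"
    if "M \<in> perm_lists N" "s \<le> N" for s M
  proof -
    have "\<forall>y\<in>set M. y \<noteq> N" using that by (auto simp: perm_lists_iff)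
    then have "\<forall>y\<in>set (take s M). y \<noteq> N" "\<forall>y\<in>set (drop s M). y \<noteq> N"
      by (auto dest: in_set_takeD in_set_dropD)
    then show "filter (\<lambda>y. y \<noteq> N) (insert_at s N M) = M"
      and "length (takeWhile (\<lambda>y. y \<noteq> N) (insert_at s N M)) = s"
      unfolding insert_at_def using that length_perm_lists[OF that(1)]
      by (simp_all add: takeWhile_append2)
  qed
  then show ?thesis using assms by metis
qed

lemma perm_lists_Suc_eq_insert_at:
  "perm_lists (Suc N) = (\<lambda>(L, s). insert_at s N L) ` (perm_lists N \<times> {..N})"
proof
  show "(\<lambda>(L, s). insert_at s N L) ` (perm_lists N \<times> {..N}) \<subseteq> perm_lists (Suc N)"
    using insert_at_perm_lists by auto
next
  show "perm_lists (Suc N) \<subseteq> (\<lambda>(L, s). insert_at s N L) ` (perm_lists N \<times> {..N})"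
  proof
    fix L' assume L': "L' \<in> perm_lists (Suc N)"
    then obtain xs ys where L'_eq: "L' = xs @ N # ys"
      by (metis perm_lists_iff atLeastLessThan_iff lessI split_list zero_le)
    moreover have "{0..<Suc N} - {N} = {0..<N}" by auto
    moreover have "distinct (xs @ ys)" "N \<notin> set (xs @ ys)" "set (xs @ ys) = set L' - {N}"
      using L' unfolding L'_eq perm_lists_iff by auto
    ultimately have "xs @ ys \<in> perm_lists N"
      using L' by (simp only: perm_lists_iff)
    moreover have "length xs \<le> N" "insert_at (length xs) N (xs @ ys) = L'"
      using calculation length_perm_lists unfolding insert_at_def L'_eq by fastforce+
    ultimately show "L' \<in> (\<lambda>(L, s). insert_at s N L) ` (perm_lists N \<times> {..N})"
      by (auto intro!: image_eqI[where x="(xs @ ys, length xs)"])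
  qed
qed

lemma sum_perm_lists_Suc:
  fixes F :: "nat list \<Rightarrow> real"
  shows "(\<Sum>L\<in>perm_lists (Suc N). F L) = (\<Sum>L\<in>perm_lists N. \<Sum>s\<le>N. F (insert_at s N L))"
proof -
  have "inj_on (\<lambda>(L, s). insert_at s N L) (perm_lists N \<times> {..N})"
    by (auto simp: inj_on_def dest: insert_at_max_inj)
  then show ?thesis
    unfolding perm_lists_Suc_eq_insert_at sum.cartesian_product
    by (subst sum.reindex) (simp_all add: case_prod_beta)
qed

definition des_sum :: "nat \<Rightarrow> (nat \<Rightarrow> real) \<Rightarrow> real" where
  "des_sum N g = (\<Sum>L\<in>perm_lists N. g (descents L))"

lemma des_sum_0: "des_sum 0 g = g 0"
  by (simp add: des_sum_def)

lemma des_sum_Suc: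
  "des_sum (Suc N) g = des_sum N (\<lambda>d. real (d + 1) * g d + (real N - real d) * g (d + 1))"
  unfolding des_sum_def sum_perm_lists_Suc
proof (intro sum.cong refl)
  fix L assume "L \<in> perm_lists N"
  then have "length L = N" "\<forall>y\<in>set L. y < N" by (auto simp: length_perm_lists perm_lists_iff)
  then show "(\<Sum>s\<le>N. g (descents (insert_at s N L)))
      = real (descents L + 1) * g (descents L) + (real N - real (descents L)) * g (descents L + 1)"
    using sum_descents_insert_at_max[of L N g] by simp
qed

lemma des_sum_3: "des_sum 3 g = g 0 + 4 * g 1 + g 2"
  by (simp add: des_sum_Suc des_sum_0 eval_nat_numeral)

lemma des_sum_4: "des_sum 4 g = g 0 + 11 * g 1 + 11 * g 2 + g 3"
  by (simp add: des_sum_Suc des_sum_0 eval_nat_numeral)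

lemma des_sum_const: "des_sum N (\<lambda>_. c) = c * fact N"
  by (simp add: des_sum_def)

lemma des_sum_poly:
  "des_sum N (\<lambda>d. c0 + c1 * real d + c2 * real d ^ 2 + c3 * real d ^ 3 + c4 * real d ^ 4)
   = c0 * fact N + c1 * des_sum N real + c2 * des_sum N (\<lambda>d. real d ^ 2)
     + c3 * des_sum N (\<lambda>d. real d ^ 3) + c4 * des_sum N (\<lambda>d. real d ^ 4)"
  unfolding des_sum_def by (simp add: sum.distrib sum_distrib_left)

definition des_moment1 :: "real \<Rightarrow> real" where
  "des_moment1 y = (y - 1) / 2"

definition des_moment2 :: "real \<Rightarrow> real" where
  "des_moment2 y = 1/3 - 5/12 * y + 1/4 * y ^ 2"

definition des_moment3 :: "real \<Rightarrow> real" where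
  "des_moment3 y = -1/4 + 3/8 * y - 1/4 * y ^ 2 + 1/8 * y ^ 3"

definition des_moment4 :: "real \<Rightarrow> real" where
  "des_moment4 y = 1/5 - 41/120 * y + 13/48 * y ^ 2 - 1/8 * y ^ 3 + 1/16 * y ^ 4"

lemmas des_moment_defs = des_moment1_def des_moment2_def des_moment3_def des_moment4_def

lemma des_sum_moments:
  assumes "4 \<le> N"
  shows "des_sum N real = fact N * des_moment1 (real N)"
    and "des_sum N (\<lambda>d. real d ^ 2) = fact N * des_moment2 (real N)"
    and "des_sum N (\<lambda>d. real d ^ 3) = fact N * des_moment3 (real N)"
    and "des_sum N (\<lambda>d. real d ^ 4) = fact N * des_moment4 (real N)"
  using assms
proof (induction N rule: nat_induct_at_least)
  case base
  show "des_sum 4 real = fact 4 * des_moment1 (real 4)"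
    and "des_sum 4 (\<lambda>d. real d ^ 2) = fact 4 * des_moment2 (real 4)"
    and "des_sum 4 (\<lambda>d. real d ^ 3) = fact 4 * des_moment3 (real 4)"
    and "des_sum 4 (\<lambda>d. real d ^ 4) = fact 4 * des_moment4 (real 4)"
    by (simp_all add: des_sum_4 des_moment_defs fact_numeral)
next
  case (Suc N)
  let ?x = "real N"
  have rec1: "(\<lambda>d. real (d + 1) * real d + (?x - real d) * real (d + 1))
      = (\<lambda>d. ?x + ?x * real d + 0 * real d ^ 2 + 0 * real d ^ 3 + 0 * real d ^ 4)"
    by (rule ext) (simp add: algebra_simps power2_eq_square)
  show "des_sum (Suc N) real = fact (Suc N) * des_moment1 (real (Suc N))"
    unfolding des_sum_Suc rec1 des_sum_poly Suc.IH by (simp add: des_moment_defs field_simps)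
  have rec2: "(\<lambda>d. real (d + 1) * real d ^ 2 + (?x - real d) * real (d + 1) ^ 2)
      = (\<lambda>d. ?x + (2 * ?x - 1) * real d + (?x - 1) * real d ^ 2 + 0 * real d ^ 3 + 0 * real d ^ 4)"
    by (rule ext) (simp add: algebra_simps power2_eq_square power3_eq_cube)
  show "des_sum (Suc N) (\<lambda>d. real d ^ 2) = fact (Suc N) * des_moment2 (real (Suc N))"
    unfolding des_sum_Suc rec2 des_sum_poly Suc.IH
    by (simp add: des_moment_defs field_simps power2_eq_square)
  have rec3: "(\<lambda>d. real (d + 1) * real d ^ 3 + (?x - real d) * real (d + 1) ^ 3)
      = (\<lambda>d. ?x + (3 * ?x - 1) * real d + (3 * ?x - 3) * real d ^ 2 + (?x - 2) * real d ^ 3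
             + 0 * real d ^ 4)"
    by (rule ext) (simp add: algebra_simps power2_eq_square power3_eq_cube power4_eq_xxxx)
  show "des_sum (Suc N) (\<lambda>d. real d ^ 3) = fact (Suc N) * des_moment3 (real (Suc N))"
    unfolding des_sum_Suc rec3 des_sum_poly Suc.IH
    by (simp add: des_moment_defs field_simps eval_nat_numeral)
  have rec4: "(\<lambda>d. real (d + 1) * real d ^ 4 + (?x - real d) * real (d + 1) ^ 4)
      = (\<lambda>d. ?x + (4 * ?x - 1) * real d + (6 * ?x - 4) * real d ^ 2 + (4 * ?x - 6) * real d ^ 3
             + (?x - 3) * real d ^ 4)"
    by (rule ext) (simp add: algebra_simps power2_eq_square power3_eq_cube power4_eq_xxxx)
  show "des_sum (Suc N) (\<lambda>d. real d ^ 4) = fact (Suc N) * des_moment4 (real (Suc N))"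
    unfolding des_sum_Suc rec4 des_sum_poly Suc.IH
    by (simp add: des_moment_defs field_simps eval_nat_numeral)
qed

lemma des_sum_quartic:
  assumes "4 \<le> N" "\<And>d. g d = c0 + c1 * real d + c2 * real d ^ 2 + c3 * real d ^ 3 + c4 * real d ^ 4"
  shows "des_sum N g = fact N * (c0 + c1 * des_moment1 (real N) + c2 * des_moment2 (real N)
                                 + c3 * des_moment3 (real N) + c4 * des_moment4 (real N))"
proof -
  have g: "g = (\<lambda>d. c0 + c1 * real d + c2 * real d ^ 2 + c3 * real d ^ 3 + c4 * real d ^ 4)"
    using assms(2) by (simp add: fun_eq_iff)
  show ?thesis
    unfolding g des_sum_poly des_sum_moments[OF assms(1)] by (simp add: algebra_simps)
qed

text \<open>The fourth moment formula fails for \<open>N = 3\<close>, but the first two already hold there.\<close>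

lemma des_sum_quadratic:
  assumes "3 \<le> N" "\<And>d. g d = c0 + c1 * real d + c2 * real d ^ 2"
  shows "des_sum N g = fact N * (c0 + c1 * des_moment1 (real N) + c2 * des_moment2 (real N))"
proof (cases "N = 3")
  case True
  then show ?thesis using assms(2) by (simp add: des_sum_3 des_moment_defs fact_numeral)
next
  case False
  then show ?thesis
    using des_sum_quartic[of N g c0 c1 c2 0 0] assms by simp
qed

section \<open>Relative order of values\<close>

fun precedes :: "'a list \<Rightarrow> 'a \<Rightarrow> 'a \<Rightarrow> bool" where
  "precedes [] a b = False"
| "precedes (x # xs) a b = ((x = a \<and> b \<in> set xs) \<or> precedes xs a b)"

fun adjacent :: "'a list \<Rightarrow> 'a \<Rightarrow> 'a \<Rightarrow> bool" where
  "adjacent (x # y # zs) a b = ((x = a \<and> y = b) \<or> adjacent (y # zs) a b)"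
| "adjacent _ a b = False"

lemma precedes_append:
  "precedes (xs @ ys) a b \<longleftrightarrow> precedes xs a b \<or> precedes ys a b \<or> (a \<in> set xs \<and> b \<in> set ys)"
  by (induction xs) auto

lemma precedes_in_set: "precedes L a b \<Longrightarrow> a \<in> set L \<and> b \<in> set L"
  by (induction L) auto

lemma precedes_map_inj: "inj f \<Longrightarrow> precedes (map f L) (f a) (f b) \<longleftrightarrow> precedes L a b"
  by (induction L) (auto simp: inj_eq image_iff)

lemma precedes_asym: "distinct L \<Longrightarrow> precedes L a b \<Longrightarrow> \<not> precedes L b a"
  by (induction L) (auto dest: precedes_in_set)

lemma precedes_total:
  "a \<in> set L \<Longrightarrow> b \<in> set L \<Longrightarrow> a \<noteq> b \<Longrightarrow> precedes L a b \<or> precedes L b a"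
  by (induction L) auto

lemma precedes_trans: "distinct L \<Longrightarrow> precedes L a b \<Longrightarrow> precedes L b c \<Longrightarrow> precedes L a c"
  by (induction L) (auto dest: precedes_in_set)

lemma adjacent_Cons: "adjacent (x # L) a b \<longleftrightarrow> (L \<noteq> [] \<and> x = a \<and> hd L = b) \<or> adjacent L a b"
  by (cases L) auto

lemma adjacent_append:
  "adjacent (xs @ ys) a b
   \<longleftrightarrow> adjacent xs a b \<or> adjacent ys a b \<or> (xs \<noteq> [] \<and> ys \<noteq> [] \<and> last xs = a \<and> hd ys = b)"
proof (induction xs)
  case (Cons x xs)
  then show ?case by (cases xs) (auto simp: adjacent_Cons)
qed simp

lemma adjacent_iff: "adjacent L a b \<longleftrightarrow> (\<exists>xs ys. L = xs @ a # b # ys)"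
proof
  show "adjacent L a b \<Longrightarrow> \<exists>xs ys. L = xs @ a # b # ys"
  proof (induction L a b rule: adjacent.induct)
    case (1 x y zs a b)
    then show ?case by (metis Cons_eq_appendI adjacent.simps(1) self_append_conv2)
  qed auto
qed (auto simp: adjacent_append)

lemma adjacent_imp_precedes: "adjacent L a b \<Longrightarrow> precedes L a b"
  by (induction L a b rule: adjacent.induct) auto

lemma adjacent_precedes_after:
  assumes "distinct L" "adjacent L x y" "precedes L x z" "z \<noteq> y"
  shows "precedes L y z"
  using assms by (auto simp: adjacent_iff precedes_append dest: precedes_in_set)

definition swap_values :: "nat \<Rightarrow> nat list \<Rightarrow> nat list" where
  "swap_values m L = map (adj_trans m) L"

lemma adj_trans_apply:
  "adj_trans m m = Suc m" "adj_trans m (Suc m) = m"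
  "x \<noteq> m \<Longrightarrow> x \<noteq> Suc m \<Longrightarrow> adj_trans m x = x"
  by (simp_all add: adj_trans_def)

lemma inj_adj_trans: "inj (adj_trans m)"
  by (simp add: adj_trans_def inj_transpose)

lemma adj_trans_adj_trans [simp]: "adj_trans m (adj_trans m x) = x"
  by (simp add: adj_trans_def)

lemma swap_values_swap_values [simp]: "swap_values m (swap_values m L) = L"
  by (simp add: swap_values_def map_idI)

lemma precedes_swap_values:
  "precedes (swap_values m L) a b \<longleftrightarrow> precedes L (adj_trans m a) (adj_trans m b)"
  using precedes_map_inj[OF inj_adj_trans, of m L "adj_trans m a" "adj_trans m b"]
  by (simp add: swap_values_def)

lemma descents_swap_values:
  "distinct L \<Longrightarrow> descents (swap_values m L) + of_bool (adjacent L (Suc m) m)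
     = descents L + of_bool (adjacent L m (Suc m))"
proof (induction L rule: descents.induct)
  case (1 x y zs)
  then have "x \<noteq> y" "x \<notin> set (y # zs)" by auto
  then have head: "of_bool (adj_trans m y < adj_trans m x) + of_bool (x = Suc m \<and> y = m)
      = of_bool (y < x) + (of_bool (x = m \<and> y = Suc m) :: nat)"
    by (auto simp: adj_trans_def Transposition.transpose_def)
  have "\<not> adjacent (y # zs) x b" for b
    using \<open>x \<notin> set (y # zs)\<close> by (meson adjacent_imp_precedes precedes_in_set)
  then have adj: "of_bool (adjacent (x # y # zs) a b)
      = of_bool (x = a \<and> y = b) + (of_bool (adjacent (y # zs) a b) :: nat)" for a b
    by auto
  have IH: "descents (swap_values m (y # zs)) + of_bool (adjacent (y # zs) (Suc m) m)
      = descents (y # zs) + of_bool (adjacent (y # zs) m (Suc m))"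
    using 1 by simp
  have "descents (swap_values m (x # y # zs))
      = of_bool (adj_trans m y < adj_trans m x) + descents (swap_values m (y # zs))"
    by (simp add: swap_values_def)
  then show ?case
    unfolding adj[of "Suc m"] adj[of m] using IH head by simp
qed (auto simp: swap_values_def)

lemma descents_swap_values_ascending:
  assumes "distinct L" "precedes L m (Suc m)"
  shows "descents (swap_values m L) = descents L + of_bool (adjacent L m (Suc m))"
proof -
  have "\<not> adjacent L (Suc m) m"
    using assms by (meson precedes_asym adjacent_imp_precedes)
  then show ?thesis using descents_swap_values[OF assms(1), of m] by simp
qed

lemma swap_values_perm_lists:
  assumes "Suc m < N"
  shows "swap_values m ` perm_lists N = perm_lists N"
proof -
  have "adj_trans m permutes {0..<N}"
    using assms unfolding adj_trans_def by (intro permutes_swap_id) auto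
  then show ?thesis
    unfolding swap_values_def by (rule permutations_of_set_image_permutes)
qed

lemma sum_perm_lists_swap_values:
  fixes F :: "nat list \<Rightarrow> real"
  assumes "Suc m < N"
  shows "(\<Sum>L\<in>perm_lists N. F (swap_values m L)) = (\<Sum>L\<in>perm_lists N. F L)"
proof -
  have "inj_on (swap_values m) (perm_lists N)"
    by (metis inj_on_inverseI swap_values_swap_values)
  then show ?thesis
    using sum.reindex[of "swap_values m" "perm_lists N" F] swap_values_perm_lists[OF assms]
    by (simp add: comp_def)
qed

definition fdiff :: "(nat \<Rightarrow> real) \<Rightarrow> nat \<Rightarrow> real" where
  "fdiff g d = g (d + 1) - g d"

lemma sum_swap_values_ascending:
  fixes W :: "nat list \<Rightarrow> real"
  assumes "Suc m < N" and "\<forall>L\<in>perm_lists N. W L \<noteq> 0 \<longrightarrow> precedes L m (Suc m)"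
  shows "(\<Sum>L\<in>perm_lists N. W (swap_values m L) * g (descents L))
       = (\<Sum>L\<in>perm_lists N. W L * g (descents L))
         + (\<Sum>L\<in>perm_lists N. of_bool (adjacent L m (Suc m)) * W L * fdiff g (descents L))"
proof -
  have "(\<Sum>L\<in>perm_lists N. W (swap_values m L) * g (descents L))
      = (\<Sum>L\<in>perm_lists N. W L * g (descents (swap_values m L)))"
    using sum_perm_lists_swap_values[OF assms(1), of "\<lambda>L. W (swap_values m L) * g (descents L)"]
    by simp
  also have "\<dots> = (\<Sum>L\<in>perm_lists N. W L * g (descents L)
      + of_bool (adjacent L m (Suc m)) * W L * fdiff g (descents L))"
  proof (intro sum.cong refl)
    fix L assume L: "L \<in> perm_lists N"
    show "W L * g (descents (swap_values m L))
        = W L * g (descents L) + of_bool (adjacent L m (Suc m)) * W L * fdiff g (descents L)"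
    proof (cases "W L = 0")
      case False
      then have "descents (swap_values m L) = descents L + of_bool (adjacent L m (Suc m))"
        using L assms(2) by (simp add: descents_swap_values_ascending perm_lists_iff)
      then show ?thesis by (simp add: fdiff_def algebra_simps)
    qed simp
  qed
  finally show ?thesis by (simp add: sum.distrib)
qed

section \<open>Splitting a value\<close>

definition shift_above :: "nat \<Rightarrow> nat \<Rightarrow> nat" where
  "shift_above u x = (if u < x then Suc x else x)"

definition split_value :: "nat \<Rightarrow> nat list \<Rightarrow> nat list" where
  "split_value u L = concat (map (\<lambda>x. if x = u then [u, Suc u] else [shift_above u x]) L)"

lemma inj_shift_above: "inj (shift_above u)"
  by (auto simp: inj_def shift_above_def split: if_splits)

lemma strict_mono_shift_above: "strict_mono (shift_above u)"
  by (auto simp: strict_mono_def shift_above_def)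

lemma shift_above_below: "x \<le> u \<Longrightarrow> shift_above u x = x"
  by (simp add: shift_above_def)

lemma shift_above_ne_Suc: "shift_above u x \<noteq> Suc u"
  by (auto simp: shift_above_def)

lemma shift_above_image: "u < M \<Longrightarrow> shift_above u ` {0..<M} = {0..<Suc M} - {Suc u}"
proof (intro set_eqI iffI)
  fix y assume "u < M" "y \<in> {0..<Suc M} - {Suc u}"
  then show "y \<in> shift_above u ` {0..<M}"
    by (cases "y \<le> u") (auto simp: shift_above_def image_iff intro: bexI[of _ "y - 1"])
qed (auto simp: shift_above_def)

lemma split_value_eq:
  assumes "u \<notin> set xs" "u \<notin> set ys"
  shows "split_value u (xs @ u # ys) = map (shift_above u) xs @ u # Suc u # map (shift_above u) ys"
proof -
  have "concat (map (\<lambda>x. if x = u then [u, Suc u] else [shift_above u x]) zs)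
      = map (shift_above u) zs"
    if "u \<notin> set zs" for zs
    using that by (induction zs) auto
  then show ?thesis using assms by (simp add: split_value_def)
qed

lemma perm_lists_split:
  assumes "L \<in> perm_lists M" "u < M"
  obtains xs ys where "L = xs @ u # ys" "u \<notin> set xs" "u \<notin> set ys"
proof -
  have "u \<in> set L" "distinct L" using assms by (auto simp: perm_lists_iff)
  moreover obtain xs ys where "L = xs @ u # ys" using \<open>u \<in> set L\<close> by (blast dest: split_list)
  ultimately show ?thesis using that by auto
qed

lemma descents_split_value:
  assumes "L \<in> perm_lists M" "u < M"
  shows "descents (split_value u L) = descents L"
proof -
  obtain xs ys where L: "L = xs @ u # ys" "u \<notin> set xs" "u \<notin> set ys"
    using perm_lists_split[OF assms] .
  let ?s = "shift_above u"
  have "hd (map ?s ys) \<noteq> u" "hd (map ?s ys) \<noteq> Suc u" if "ys \<noteq> []"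
    using that L(3) shift_above_ne_Suc by (auto simp: hd_map shift_above_def split: if_splits)
  then have "descents (u # Suc u # map ?s ys) = descents (u # map ?s ys)"
    by (auto simp: descents_Cons)
  moreover have "descents (map ?s L) = descents L"
    by (rule descents_map_strict_mono[OF strict_mono_shift_above])
  moreover have "map ?s L = map ?s xs @ u # map ?s ys"
    using L by (simp add: shift_above_def)
  ultimately show ?thesis
    using L by (simp add: split_value_eq descents_append)
qed

lemma split_value_perm_lists:
  assumes "L \<in> perm_lists M" "u < M"
  shows "split_value u L \<in> perm_lists (Suc M)"
proof -
  obtain xs ys where L: "L = xs @ u # ys" "u \<notin> set xs" "u \<notin> set ys"
    using perm_lists_split[OF assms] .
  let ?s = "shift_above u"
  have d: "distinct L" and s: "set L = {0..<M}" using assms(1) by (auto simp: perm_lists_iff)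
  have split: "split_value u L = map ?s xs @ u # Suc u # map ?s ys"
    using L by (simp add: split_value_eq)
  have shifted: "map ?s L = map ?s xs @ u # map ?s ys"
    using L by (simp add: shift_above_def)
  have "distinct (map ?s L)"
    using d inj_shift_above by (simp add: distinct_map inj_def inj_on_def)
  moreover have "Suc u \<notin> set (map ?s L)"
    by (auto simp: shift_above_def)
  ultimately have "distinct (split_value u L)"
    unfolding split shifted by auto
  moreover have "set (map ?s L) = {0..<Suc M} - {Suc u}"
    using s shift_above_image[OF assms(2)] by simp
  then have "set (split_value u L) = {0..<Suc M}"
    unfolding split using shifted assms(2) by auto
  ultimately show ?thesis by (simp add: perm_lists_iff)
qed

lemma adjacent_split_value:
  assumes "L \<in> perm_lists M" "u < M"
  shows "adjacent (split_value u L) u (Suc u)"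
proof -
  obtain xs ys where "L = xs @ u # ys" "u \<notin> set xs" "u \<notin> set ys"
    using perm_lists_split[OF assms] .
  then show ?thesis by (simp add: split_value_eq adjacent_append)
qed

lemma remove1_split_value:
  assumes "L \<in> perm_lists M" "u < M"
  shows "remove1 (Suc u) (split_value u L) = map (shift_above u) L"
proof -
  obtain xs ys where L: "L = xs @ u # ys" "u \<notin> set xs" "u \<notin> set ys"
    using perm_lists_split[OF assms] .
  have "Suc u \<notin> set (map (shift_above u) xs)" by (auto simp: shift_above_def)
  then show ?thesis using L by (simp add: split_value_eq remove1_append shift_above_def)
qed

lemma split_value_surj:
  assumes "L \<in> perm_lists (Suc M)" "u < M" "adjacent L u (Suc u)"
  shows "L \<in> split_value u ` perm_lists M"
proof -
  obtain xs ys where L: "L = xs @ u # Suc u # ys" using assms(3) by (auto simp: adjacent_iff)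
  have d: "distinct L" and s: "set L = {0..<Suc M}" using assms(1) by (auto simp: perm_lists_iff)
  then have xs: "u \<notin> set xs" "Suc u \<notin> set xs" and ys: "u \<notin> set ys" "Suc u \<notin> set ys"
    unfolding L by auto
  define merge where "merge x = (if Suc u < x then x - 1 else x)" for x
  have shift_merge: "shift_above u (merge x) = x" if "x \<noteq> Suc u" for x
    using that by (auto simp: shift_above_def merge_def)
  have merge_ne: "merge x \<noteq> u" if "x \<noteq> u" for x
    using that by (auto simp: merge_def)
  define L' where "L' = map merge xs @ u # map merge ys"
  have shifted: "map (shift_above u) L' = xs @ u # ys"
    unfolding L'_def using xs ys by (auto simp: shift_above_below intro!: map_idI shift_merge)
  have "u \<notin> set (map merge xs)" "u \<notin> set (map merge ys)"
    using xs ys merge_ne by (metis imageE set_map)+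
  then have "split_value u L' = L"
    unfolding L'_def using xs ys
    by (subst split_value_eq) (auto simp: L intro!: map_idI shift_merge)
  moreover have "L' \<in> perm_lists M"
  proof -
    have "distinct (xs @ u # ys)" "set (xs @ u # ys) = {0..<Suc M} - {Suc u}"
      using d s xs ys unfolding L by auto
    then have "distinct (map (shift_above u) L')" "shift_above u ` set L' = shift_above u ` {0..<M}"
      unfolding shifted[symmetric] shift_above_image[OF assms(2)] by simp_all
    then show ?thesis
      by (simp add: perm_lists_iff distinct_map inj_image_eq_iff[OF inj_shift_above])
  qed
  ultimately show ?thesis by blast
qed

lemma sum_adjacent_split_value:
  fixes F :: "nat list \<Rightarrow> real"
  assumes "u < M"
  shows "(\<Sum>L\<in>perm_lists (Suc M). of_bool (adjacent L u (Suc u)) * F L)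
       = (\<Sum>L\<in>perm_lists M. F (split_value u L))"
proof -
  have "{L\<in>perm_lists (Suc M). adjacent L u (Suc u)} = split_value u ` perm_lists M"
    using split_value_surj[OF _ assms] split_value_perm_lists[OF _ assms]
      adjacent_split_value[OF _ assms] by blast
  moreover have "inj_on (split_value u) (perm_lists M)"
    using remove1_split_value[OF _ assms] inj_shift_above
    by (intro inj_onI) (metis inj_map_eq_map)
  moreover have "(\<Sum>L\<in>perm_lists (Suc M). of_bool (adjacent L u (Suc u)) * F L)
      = (\<Sum>L\<in>{L\<in>perm_lists (Suc M). adjacent L u (Suc u)}. F L)"
    unfolding sum.inter_filter[OF finite_permutations_of_set] by (intro sum.cong) auto
  ultimately show ?thesis by (simp add: sum.reindex)
qed

lemma precedes_split_value_shift:
  assumes "L \<in> perm_lists M" "u < M"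
  shows "precedes (split_value u L) (shift_above u a) (shift_above u b) \<longleftrightarrow> precedes L a b"
proof -
  obtain xs ys where L: "L = xs @ u # ys" "u \<notin> set xs" "u \<notin> set ys"
    using perm_lists_split[OF assms] .
  have "precedes (split_value u L) (shift_above u a) (shift_above u b)
      \<longleftrightarrow> precedes (map (shift_above u) L) (shift_above u a) (shift_above u b)"
    using L shift_above_ne_Suc
    by (simp add: split_value_eq precedes_append shift_above_def)
  also have "\<dots> \<longleftrightarrow> precedes L a b" by (rule precedes_map_inj[OF inj_shift_above])
  finally show ?thesis .
qed

lemma precedes_adjacent_same:
  assumes "distinct (A @ c # d # B)" "v \<noteq> c" "v \<noteq> d"
  shows "precedes (A @ c # d # B) c v \<longleftrightarrow> precedes (A @ c # d # B) d v"
  using assms by (auto simp: precedes_append dest: precedes_in_set)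

lemma precedes_split_value_Suc:
  assumes "L \<in> perm_lists M" "u < M" "v \<noteq> u" "v \<noteq> Suc u"
  shows "precedes (split_value u L) (Suc u) v \<longleftrightarrow> precedes (split_value u L) u v"
proof -
  obtain xs ys where L: "L = xs @ u # ys" "u \<notin> set xs" "u \<notin> set ys"
    using perm_lists_split[OF assms(1,2)] .
  have "distinct (split_value u L)"
    using split_value_perm_lists[OF assms(1,2)] by (simp add: perm_lists_iff)
  then show ?thesis
    using L precedes_adjacent_same[of _ u "Suc u" _ v] assms(3,4) by (simp add: split_value_eq)
qed

section \<open>Descent sums weighted by inverse descents\<close>

definition des_sum_on :: "nat \<Rightarrow> (nat list \<Rightarrow> bool) \<Rightarrow> (nat \<Rightarrow> real) \<Rightarrow> real" where
  "des_sum_on N R g = (\<Sum>L\<in>perm_lists N. of_bool (R L) * g (descents L))"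

text \<open>For \<open>L = [w 0, \<dots>, w n]\<close> this says \<open>w\<^sup>-\<^sup>1 (j + 1) < w\<^sup>-\<^sup>1 j\<close>: a descent of the inverse.\<close>

abbreviation ides_at :: "nat \<Rightarrow> nat list \<Rightarrow> bool" where
  "ides_at j L \<equiv> precedes L (Suc j) j"

lemma precedes_iff_not_precedes:
  assumes "L \<in> perm_lists N" "a < N" "b < N" "a \<noteq> b"
  shows "precedes L a b \<longleftrightarrow> \<not> precedes L b a"
  using assms precedes_total[of a L b] precedes_asym[of L a b] by (auto simp: perm_lists_iff)

text \<open>The swap exchanges lists with and without an inverse descent at \<open>m\<close>; the correction term
  lives on lists with \<open>m, m + 1\<close> adjacent, which are the images of \<open>split_value m\<close>.\<close>

lemma sum_ides_at_weighted:
  fixes H :: "nat list \<Rightarrow> real"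
  assumes "m < M" and H: "\<forall>L\<in>perm_lists (Suc M). H (swap_values m L) = H L"
  shows "2 * (\<Sum>L\<in>perm_lists (Suc M). of_bool (ides_at m L) * H L * g (descents L))
       = (\<Sum>L\<in>perm_lists (Suc M). H L * g (descents L))
         + (\<Sum>L\<in>perm_lists M. H (split_value m L) * fdiff g (descents L))"
proof -
  let ?P = "perm_lists (Suc M)"
  have N: "Suc m < Suc M" using assms(1) by simp
  define W where "W L = of_bool (\<not> ides_at m L) * H L" for L
  have asc: "\<forall>L\<in>?P. W L \<noteq> 0 \<longrightarrow> precedes L m (Suc m)"
    using precedes_iff_not_precedes[of _ "Suc M" m "Suc m"] N by (auto simp: W_def)
  have "(\<Sum>L\<in>?P. of_bool (ides_at m L) * H L * g (descents L))
      = (\<Sum>L\<in>?P. W (swap_values m L) * g (descents L))"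
    using H precedes_iff_not_precedes[of _ "Suc M" "Suc m" m] N
    by (intro sum.cong refl) (auto simp: W_def precedes_swap_values adj_trans_apply)
  also have "\<dots> = (\<Sum>L\<in>?P. W L * g (descents L))
      + (\<Sum>L\<in>?P. of_bool (adjacent L m (Suc m)) * (H L * fdiff g (descents L)))"
    unfolding sum_swap_values_ascending[OF N asc]
    using asc by (intro arg_cong2[where f="(+)"] refl sum.cong)
      (auto simp: W_def dest: adjacent_imp_precedes precedes_asym[rotated] simp: perm_lists_iff)
  also have "(\<Sum>L\<in>?P. of_bool (adjacent L m (Suc m)) * (H L * fdiff g (descents L)))
      = (\<Sum>L\<in>perm_lists M. H (split_value m L) * fdiff g (descents L))"
    by (simp add: sum_adjacent_split_value[OF assms(1)] descents_split_value[OF _ assms(1)])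
  finally have "(\<Sum>L\<in>?P. of_bool (ides_at m L) * H L * g (descents L))
      = (\<Sum>L\<in>?P. W L * g (descents L))
        + (\<Sum>L\<in>perm_lists M. H (split_value m L) * fdiff g (descents L))" .
  moreover have "(\<Sum>L\<in>?P. H L * g (descents L))
      = (\<Sum>L\<in>?P. of_bool (ides_at m L) * H L * g (descents L)) + (\<Sum>L\<in>?P. W L * g (descents L))"
    unfolding sum.distrib[symmetric] W_def by (intro sum.cong) auto
  ultimately show ?thesis by simp
qed

lemma des_sum_on_ides_at:
  assumes "m < M"
  shows "2 * des_sum_on (Suc M) (ides_at m) g = des_sum (Suc M) g + des_sum M (fdiff g)"
  using sum_ides_at_weighted[OF assms, of "\<lambda>_. 1" g] by (simp add: des_sum_on_def des_sum_def)

lemma ides_at_split_value_below: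
  assumes "L \<in> perm_lists M" "u < M" "j < u"
  shows "ides_at j (split_value u L) \<longleftrightarrow> ides_at j L"
  using precedes_split_value_shift[OF assms(1,2), of "Suc j" j] assms(3)
  by (simp add: shift_above_below)

lemma ides_at_split_value_above:
  assumes "L \<in> perm_lists M" "u < M" "Suc u < j"
  shows "ides_at j (split_value u L) \<longleftrightarrow> ides_at (j - 1) L"
proof -
  have "shift_above u j = Suc j" "shift_above u (j - 1) = j"
    using assms(3) by (auto simp: shift_above_def)
  then show ?thesis
    using precedes_split_value_shift[OF assms(1,2), of j "j - 1"] assms(3) by simp
qed

lemma des_sum_on_ides_at_far:
  assumes "m < Suc M" "j < Suc M" "Suc j < m \<or> Suc m < j"
  shows "4 * des_sum_on (Suc (Suc M)) (\<lambda>L. ides_at m L \<and> ides_at j L) g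
    = des_sum (Suc (Suc M)) g + 2 * des_sum (Suc M) (fdiff g) + des_sum M (fdiff (fdiff g))"
proof -
  define j' where "j' = (if j < m then j else j - 1)"
  have "j' < M" using assms unfolding j'_def by auto
  have H: "\<forall>L\<in>perm_lists (Suc (Suc M)).
      of_bool (ides_at j (swap_values m L)) = (of_bool (ides_at j L) :: real)"
    using assms(3) by (auto simp: precedes_swap_values adj_trans_apply)
  have split: "ides_at j (split_value m L) \<longleftrightarrow> ides_at j' L" if "L \<in> perm_lists (Suc M)" for L
    using assms ides_at_split_value_below[OF that assms(1), of j]
      ides_at_split_value_above[OF that assms(1), of j]
    unfolding j'_def by auto
  have "2 * des_sum_on (Suc (Suc M)) (\<lambda>L. ides_at m L \<and> ides_at j L) g
      = des_sum_on (Suc (Suc M)) (ides_at j) g + des_sum_on (Suc M) (ides_at j') (fdiff g)"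
    using sum_ides_at_weighted[OF assms(1) H, of g] split
    by (simp add: des_sum_on_def mult.assoc Collect_conj_eq Int_assoc)
  then show ?thesis
    using des_sum_on_ides_at[of j "Suc M" g] des_sum_on_ides_at[OF \<open>j' < M\<close>, of "fdiff g"] assms(2)
    by simp
qed

lemma des_sum_on_swap_values:
  assumes "Suc m < N" "\<forall>L\<in>perm_lists N. R L \<longrightarrow> precedes L m (Suc m)"
  shows "des_sum_on N (\<lambda>L. R (swap_values m L)) g
       = des_sum_on N R g
         + (\<Sum>L\<in>perm_lists N. of_bool (adjacent L m (Suc m) \<and> R L) * fdiff g (descents L))"
  using sum_swap_values_ascending[OF assms(1), of "\<lambda>L. of_bool (R L)" g] assms(2)
  by (simp add: des_sum_on_def mult.assoc Collect_conj_eq Int_assoc)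

lemma sum_adjacent_precedes_down:
  assumes "Suc m < M" "u = m \<or> u = Suc m"
  shows "(\<Sum>L\<in>perm_lists (Suc M). of_bool (adjacent L u (Suc u) \<and> precedes L (Suc (Suc m)) m)
            * fdiff g (descents L))
       = des_sum_on M (ides_at m) (fdiff g)"
proof -
  have u: "u < M" using assms by auto
  have "precedes (split_value u L) (Suc (Suc m)) m \<longleftrightarrow> ides_at m L" if "L \<in> perm_lists M" for L
    using assms(2)
  proof
    assume "u = m"
    then show ?thesis
      using precedes_split_value_shift[OF that u, of "Suc m" m] by (simp add: shift_above_def)
  next
    assume "u = Suc m"
    then show ?thesis
      using precedes_split_value_Suc[OF that u, of m]
        precedes_split_value_shift[OF that u, of "Suc m" m]
      by (simp add: shift_above_def)
  qed
  then show ?thesis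
    using sum_adjacent_split_value[OF u,
        of "\<lambda>L. of_bool (precedes L (Suc (Suc m)) m) * fdiff g (descents L)"]
    by (simp add: des_sum_on_def descents_split_value[OF _ u] mult.assoc Collect_conj_eq Int_assoc
      cong: sum.cong)
qed

abbreviation in_order :: "nat list \<Rightarrow> nat \<Rightarrow> nat \<Rightarrow> nat \<Rightarrow> bool" where
  "in_order L x y z \<equiv> precedes L x y \<and> precedes L y z"

text \<open>In the next three lemmas \<open>a, b, c\<close> stand for the values \<open>m, m + 1, m + 2\<close>; they compare
  the relative orders \<open>cba\<close>, \<open>bca\<close>, \<open>cab\<close> and \<open>bac\<close> by swapping two consecutive values.\<close>

lemma des_sum_on_cba_eq_bca:
  assumes "Suc m < M"
  shows "des_sum_on (Suc M) (\<lambda>L. in_order L (Suc (Suc m)) (Suc m) m) g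
       = des_sum_on (Suc M) (\<lambda>L. in_order L (Suc m) (Suc (Suc m)) m) g
         + des_sum_on M (ides_at m) (fdiff g)"
proof -
  let ?R = "\<lambda>L. in_order L (Suc m) (Suc (Suc m)) m"
  have "(\<lambda>L. in_order L (Suc (Suc m)) (Suc m) m) = (\<lambda>L. ?R (swap_values (Suc m) L))"
    by (simp add: fun_eq_iff precedes_swap_values adj_trans_apply)
  moreover have "(\<Sum>L\<in>perm_lists (Suc M). of_bool (adjacent L (Suc m) (Suc (Suc m)) \<and> ?R L)
        * fdiff g (descents L))
      = des_sum_on M (ides_at m) (fdiff g)"
    using sum_adjacent_precedes_down[OF assms, of "Suc m" g]
    by (simp add: adjacent_imp_precedes cong: conj_cong)
  ultimately show ?thesis
    using des_sum_on_swap_values[of "Suc m" "Suc M" ?R g] assms by simp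
qed

lemma des_sum_on_cba_eq_cab:
  assumes "Suc m < M"
  shows "des_sum_on (Suc M) (\<lambda>L. in_order L (Suc (Suc m)) (Suc m) m) g
       = des_sum_on (Suc M) (\<lambda>L. in_order L (Suc (Suc m)) m (Suc m)) g
         + des_sum_on M (ides_at m) (fdiff g)"
proof -
  let ?R = "\<lambda>L. in_order L (Suc (Suc m)) m (Suc m)"
  have "(\<lambda>L. in_order L (Suc (Suc m)) (Suc m) m) = (\<lambda>L. ?R (swap_values m L))"
    by (simp add: fun_eq_iff precedes_swap_values adj_trans_apply)
  moreover have "(\<Sum>L\<in>perm_lists (Suc M). of_bool (adjacent L m (Suc m) \<and> ?R L)
        * fdiff g (descents L))
      = des_sum_on M (ides_at m) (fdiff g)"
    using sum_adjacent_precedes_down[OF assms, of m g]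
    by (simp add: adjacent_imp_precedes cong: conj_cong)
  ultimately show ?thesis
    using des_sum_on_swap_values[of m "Suc M" ?R g] assms by simp
qed

lemma des_sum_on_cab_eq_bac:
  assumes "Suc m < M"
  shows "des_sum_on (Suc M) (\<lambda>L. in_order L (Suc (Suc m)) m (Suc m)) g
       = des_sum_on (Suc M) (\<lambda>L. in_order L (Suc m) m (Suc (Suc m))) g"
proof -
  let ?R = "\<lambda>L. in_order L (Suc m) m (Suc (Suc m))"
  have "(\<lambda>L. in_order L (Suc (Suc m)) m (Suc m)) = (\<lambda>L. ?R (swap_values (Suc m) L))"
    by (simp add: fun_eq_iff precedes_swap_values adj_trans_apply)
  moreover have "\<forall>L\<in>perm_lists (Suc M). ?R L \<longrightarrow> precedes L (Suc m) (Suc (Suc m))"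
    by (auto simp: perm_lists_iff intro: precedes_trans)
  moreover have "\<not> (adjacent L (Suc m) (Suc (Suc m)) \<and> ?R L)" if "L \<in> perm_lists (Suc M)" for L
    using that adjacent_precedes_after[of L "Suc m" "Suc (Suc m)" m]
      precedes_asym[of L m "Suc (Suc m)"]
    by (auto simp: perm_lists_iff)
  then have "(\<Sum>L\<in>perm_lists (Suc M). of_bool (adjacent L (Suc m) (Suc (Suc m)) \<and> ?R L)
      * fdiff g (descents L)) = 0"
    by (intro sum.neutral) auto
  ultimately show ?thesis
    using des_sum_on_swap_values[of "Suc m" "Suc M" ?R g] assms by simp
qed

lemma ides_at_split_by_third:
  assumes "L \<in> perm_lists N" "Suc (Suc m) < N"
  shows "of_bool (ides_at m L)
    = of_bool (in_order L (Suc m) (Suc (Suc m)) m) + of_bool (in_order L (Suc m) m (Suc (Suc m)))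
      + (of_bool (in_order L (Suc (Suc m)) (Suc m) m) :: real)"
proof -
  have d: "distinct L" using assms by (simp add: perm_lists_iff)
  have flip: "precedes L (Suc m) (Suc (Suc m)) \<longleftrightarrow> \<not> precedes L (Suc (Suc m)) (Suc m)"
    "precedes L m (Suc (Suc m)) \<longleftrightarrow> \<not> precedes L (Suc (Suc m)) m"
    using precedes_iff_not_precedes[OF assms(1), of "Suc m" "Suc (Suc m)"]
      precedes_iff_not_precedes[OF assms(1), of m "Suc (Suc m)"] assms(2) by simp_all
  have "of_bool X = of_bool (\<not> Z \<and> Y) + of_bool (X \<and> \<not> Y) + (of_bool (Z \<and> X) :: real)"
    if "Z \<and> X \<longrightarrow> Y" "\<not> Z \<and> Y \<longrightarrow> X" for X Y Z
    using that by auto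
  moreover have
    "precedes L (Suc (Suc m)) (Suc m) \<and> precedes L (Suc m) m \<longrightarrow> precedes L (Suc (Suc m)) m"
    "precedes L (Suc m) (Suc (Suc m)) \<and> precedes L (Suc (Suc m)) m \<longrightarrow> precedes L (Suc m) m"
    using precedes_trans[OF d] by (meson, meson)
  ultimately show ?thesis
    unfolding flip by blast
qed

lemma des_sum_on_ides_at_consecutive:
  assumes "Suc m < M"
  shows "3 * des_sum_on (Suc M) (\<lambda>L. ides_at m L \<and> ides_at (Suc m) L) g
    = des_sum_on (Suc M) (ides_at m) g + 2 * des_sum_on M (ides_at m) (fdiff g)"
proof -
  have "des_sum_on (Suc M) (ides_at m) g
      = des_sum_on (Suc M) (\<lambda>L. in_order L (Suc m) (Suc (Suc m)) m) g
        + des_sum_on (Suc M) (\<lambda>L. in_order L (Suc m) m (Suc (Suc m))) g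
        + des_sum_on (Suc M) (\<lambda>L. in_order L (Suc (Suc m)) (Suc m) m) g"
    unfolding des_sum_on_def sum.distrib[symmetric] distrib_right[symmetric]
    using ides_at_split_by_third[of _ "Suc M" m] assms by (intro sum.cong refl) simp
  then show ?thesis
    using des_sum_on_cba_eq_bca[OF assms, of g] des_sum_on_cba_eq_cab[OF assms, of g]
      des_sum_on_cab_eq_bac[OF assms, of g]
    by (simp add: conj_commute)
qed

definition ides :: "nat list \<Rightarrow> nat" where
  "ides L = (\<Sum>j<length L - 1. of_bool (ides_at j L))"

lemma ides_perm_lists: "L \<in> perm_lists (Suc M) \<Longrightarrow> real (ides L) = (\<Sum>j<M. of_bool (ides_at j L))"
  by (simp add: ides_def length_perm_lists)

lemma sum_des_ides:
  "(\<Sum>L\<in>perm_lists (Suc M). g (descents L) * real (ides L))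
   = real M * (des_sum (Suc M) g + des_sum M (fdiff g)) / 2"
proof -
  have "(\<Sum>L\<in>perm_lists (Suc M). g (descents L) * real (ides L))
      = (\<Sum>j<M. des_sum_on (Suc M) (ides_at j) g)"
    unfolding des_sum_on_def
    by (subst sum.swap) (simp add: ides_perm_lists sum_distrib_left mult.commute)
  also have "\<dots> = (\<Sum>j<M. (des_sum (Suc M) g + des_sum M (fdiff g)) / 2)"
    using des_sum_on_ides_at by (intro sum.cong refl) (simp add: field_simps)
  finally show ?thesis by simp
qed

lemma sum_tridiagonal:
  fixes a x b :: real
  assumes "1 \<le> M"
  shows "(\<Sum>j<M. \<Sum>k<M. if j = k then a else if j = Suc k \<or> k = Suc j then x else b)
     = real M * a + 2 * (real M - 1) * x + (real M - 1) * (real M - 2) * b"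
  using assms
proof (induction M rule: nat_induct_at_least)
  case (Suc M)
  let ?w = "\<lambda>j k. if j = k then a else if j = Suc k \<or> k = Suc j then x else b"
  obtain n where M: "M = Suc n" using Suc.hyps by (cases M) auto
  have "(\<Sum>j<M. ?w j M) = (\<Sum>j<M. if Suc j = M then x else b)"
    "(\<Sum>k<M. ?w M k) = (\<Sum>k<M. if Suc k = M then x else b)"
    by (auto intro: sum.cong)
  moreover have "(\<Sum>j<M. if Suc j = M then x else b) = x + (real M - 1) * b"
    unfolding M by (simp add: sum.lessThan_Suc cong: sum.cong_simp)
  ultimately show ?case
    using Suc.IH by (simp add: sum.distrib algebra_simps)
qed simp

lemma sum_des_ides_sq_conv_pairs:
  "(\<Sum>L\<in>perm_lists (Suc M). g (descents L) * real (ides L) ^ 2)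
   = (\<Sum>j<M. \<Sum>k<M. des_sum_on (Suc M) (\<lambda>L. ides_at j L \<and> ides_at k L) g)"
proof -
  have "g (descents L) * real (ides L) ^ 2
      = (\<Sum>j<M. \<Sum>k<M. of_bool (ides_at j L \<and> ides_at k L) * g (descents L))"
    if "L \<in> perm_lists (Suc M)" for L
    unfolding power2_eq_square ides_perm_lists[OF that] sum_product
    unfolding of_bool_conj sum_distrib_left by (simp only: mult_ac)
  then have "(\<Sum>L\<in>perm_lists (Suc M). g (descents L) * real (ides L) ^ 2)
      = (\<Sum>L\<in>perm_lists (Suc M). \<Sum>j<M. \<Sum>k<M. of_bool (ides_at j L \<and> ides_at k L) * g (descents L))"
    by (rule sum.cong[OF refl])
  also have "\<dots> = (\<Sum>j<M. \<Sum>k<M. des_sum_on (Suc M) (\<lambda>L. ides_at j L \<and> ides_at k L) g)"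
    unfolding des_sum_on_def by (subst sum.swap) (simp add: sum.swap[of _ "perm_lists (Suc M)"])
  finally show ?thesis .
qed

lemma sum_des_ides_sq:
  assumes "1 \<le> M"
  shows "(\<Sum>L\<in>perm_lists (Suc (Suc M)). g (descents L) * real (ides L) ^ 2)
    = real (Suc M) * ((des_sum (Suc (Suc M)) g + des_sum (Suc M) (fdiff g)) / 2)
      + 2 * real M * ((des_sum (Suc (Suc M)) g + 3 * des_sum (Suc M) (fdiff g)
                       + 2 * des_sum M (fdiff (fdiff g))) / 6)
      + real M * (real M - 1) * ((des_sum (Suc (Suc M)) g + 2 * des_sum (Suc M) (fdiff g)
                                  + des_sum M (fdiff (fdiff g))) / 4)"
proof -
  let ?N = "Suc (Suc M)"
  define a where "a = (des_sum ?N g + des_sum (Suc M) (fdiff g)) / 2"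
  define x where
    "x = (des_sum ?N g + 3 * des_sum (Suc M) (fdiff g) + 2 * des_sum M (fdiff (fdiff g))) / 6"
  define b where
    "b = (des_sum ?N g + 2 * des_sum (Suc M) (fdiff g) + des_sum M (fdiff (fdiff g))) / 4"
  define W where "W j k = des_sum_on ?N (\<lambda>L. ides_at j L \<and> ides_at k L) g" for j k
  have diag: "des_sum_on ?N (ides_at j) g = a" if "j < Suc M" for j
    using des_sum_on_ides_at[of j "Suc M" g] that unfolding a_def by simp
  have next_diag: "W j (Suc j) = x" if "Suc j < Suc M" for j
    using des_sum_on_ides_at_consecutive[of j "Suc M" g] diag[of j]
      des_sum_on_ides_at[of j M "fdiff g"] that
    unfolding W_def x_def a_def by (simp add: field_simps)
  have W: "W j k = (if j = k then a else if j = Suc k \<or> k = Suc j then x else b)"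
    if "j < Suc M" "k < Suc M" for j k
  proof -
    consider "j = k" | "k = Suc j" | "j = Suc k" | "Suc j < k \<or> Suc k < j" by linarith
    then show ?thesis
    proof cases
      case 1
      then show ?thesis using diag[OF that(1)] by (simp add: W_def)
    next
      case 2
      then show ?thesis using next_diag[of j] that by simp
    next
      case 3
      then have "W j k = W k j" unfolding W_def by (simp add: conj_commute)
      then show ?thesis using 3 next_diag[of k] that by simp
    next
      case 4
      then show ?thesis
        using des_sum_on_ides_at_far[of j M k g] that unfolding W_def b_def by auto
    qed
  qed
  have "(\<Sum>L\<in>perm_lists ?N. g (descents L) * real (ides L) ^ 2) = (\<Sum>j<Suc M. \<Sum>k<Suc M. W j k)"
    unfolding W_def by (rule sum_des_ides_sq_conv_pairs)
  also have "\<dots> = (\<Sum>j<Suc M. \<Sum>k<Suc M. if j = k then a else if j = Suc k \<or> k = Suc j then x else b)"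
    by (intro sum.cong refl) (simp add: W)
  also have "\<dots> = real (Suc M) * a + 2 * real M * x + real M * (real M - 1) * b"
    by (subst sum_tridiagonal) (simp_all add: algebra_simps)
  finally show ?thesis unfolding a_def x_def b_def by simp
qed

section \<open>Word length and descents in type \<open>A\<close>\<close>

context
begin

declare upt_Suc [simp del]

fun inversions :: "nat list \<Rightarrow> nat" where
  "inversions [] = 0"
| "inversions (x # xs) = length (filter (\<lambda>y. y < x) xs) + inversions xs"

lemma inversions_swap_adjacent:
  "inversions (xs @ a # b # ys) + of_bool (a < b) = inversions (xs @ b # a # ys) + of_bool (b < a)"
  by (induction xs) auto

lemma inversions_eq_0_iff: "inversions L = 0 \<longleftrightarrow> sorted L"
  by (induction L) (auto simp: filter_empty_conv not_less)

definition perm_inversions :: "nat \<Rightarrow> (nat \<Rightarrow> nat) \<Rightarrow> nat" where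
  "perm_inversions n w = inversions (map w [0..<Suc n])"

lemma map_upt_split_at:
  assumes "i < n"
  shows "map f [0..<Suc n] = map f [0..<i] @ f i # f (Suc i) # map f [Suc (Suc i)..<Suc n]"
proof -
  have "[0..<Suc n] = [0..<i] @ [i..<Suc n]"
    using assms upt_add_eq_append[of 0 i "Suc n - i"] by simp
  also have "[i..<Suc n] = i # Suc i # [Suc (Suc i)..<Suc n]"
    using assms by (simp add: upt_conv_Cons)
  finally show ?thesis by simp
qed

lemma perm_inversions_comp_adj_trans:
  assumes "i < n"
  shows "perm_inversions n (f \<circ> adj_trans i) + of_bool (f (Suc i) < f i)
       = perm_inversions n f + of_bool (f i < f (Suc i))"
proof -
  have swapped: "map (f \<circ> adj_trans i) [0..<Suc n]
      = map f [0..<i] @ f (Suc i) # f i # map f [Suc (Suc i)..<Suc n]"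
    unfolding map_upt_split_at[OF assms] by (auto simp: adj_trans_apply)
  show ?thesis
    unfolding perm_inversions_def swapped map_upt_split_at[OF assms, of f]
    by (rule inversions_swap_adjacent)
qed

lemma gen_word_Nil: "gen_word [] = id"
  by (simp add: gen_word_def)

lemma gen_word_snoc: "gen_word (is @ [i]) = gen_word is \<circ> adj_trans i"
  by (induction "is") (auto simp: gen_word_def)

lemma perm_inversions_id: "perm_inversions n id = 0"
  by (simp add: perm_inversions_def inversions_eq_0_iff)

lemma perm_inversions_gen_word_le:
  "set is \<subseteq> {..<n} \<Longrightarrow> perm_inversions n (gen_word is) \<le> length is"
proof (induction "is" rule: rev_induct)
  case (snoc i "is")
  then have "i < n" "perm_inversions n (gen_word is) \<le> length is" by auto
  moreover have
    "perm_inversions n (gen_word is \<circ> adj_trans i) \<le> perm_inversions n (gen_word is) + 1"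
    using perm_inversions_comp_adj_trans[OF \<open>i < n\<close>, of "gen_word is"]
    by (cases "gen_word is i < gen_word is (Suc i)") auto
  ultimately show ?case
    unfolding gen_word_snoc length_append_singleton by linarith
qed (simp add: gen_word_Nil perm_inversions_id)

lemma adj_trans_permutes: "i < n \<Longrightarrow> adj_trans i permutes {0..n}"
  unfolding adj_trans_def by (rule permutes_swap_id) auto

lemma perm_list_distinct_set:
  assumes "w permutes {0..n}"
  shows "distinct (map w [0..<Suc n])" "set (map w [0..<Suc n]) = {0..<Suc n}"
proof -
  have e: "{0..n} = {0..<Suc n}" by auto
  show "distinct (map w [0..<Suc n])"
    using permutes_inj_on[OF assms] e by (simp add: distinct_map)
  show "set (map w [0..<Suc n]) = {0..<Suc n}"
    using permutes_image[OF assms] e by simp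
qed

lemma permutes_sorted_eq_id:
  assumes "w permutes {0..n}" "sorted (map w [0..<Suc n])"
  shows "w = id"
proof -
  have "map w [0..<Suc n] = [0..<Suc n]"
    using sorted_distinct_set_unique[OF assms(2) perm_list_distinct_set(1)[OF assms(1)],
        of "[0..<Suc n]"] perm_list_distinct_set(2)[OF assms(1)] by simp
  then have "w k = k" for k
    using permutes_not_in[OF assms(1)]
    by (cases "k < Suc n") (auto, metis add_0 diff_zero nth_map_upt nth_upt)
  then show ?thesis by (simp add: fun_eq_iff)
qed

text \<open>Right multiplication by a simple generator at a descent removes one inversion; this gives
  a word whose length is the number of inversions.\<close>

lemma reduced_word_exists:
  assumes "w permutes {0..n}"
  shows "\<exists>is. length is = perm_inversions n w \<and> set is \<subseteq> {..<n} \<and> w = gen_word is"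
  using assms
proof (induction "perm_inversions n w" arbitrary: w rule: less_induct)
  case less
  show ?case
  proof (cases "sorted (map w [0..<Suc n])")
    case True
    then show ?thesis
      using permutes_sorted_eq_id[OF less.prems] perm_inversions_id
      by (intro exI[of _ "[]"]) (simp add: gen_word_Nil)
  next
    case False
    then obtain i where i: "i < n" "w (Suc i) < w i"
      unfolding sorted_iff_nth_Suc by (auto simp: not_le)
    define w' where "w' = w \<circ> adj_trans i"
    have "w' permutes {0..n}"
      unfolding w'_def by (rule permutes_compose[OF adj_trans_permutes[OF i(1)] less.prems])
    moreover have step: "perm_inversions n w' + 1 = perm_inversions n w"
      using perm_inversions_comp_adj_trans[OF i(1), of w] i(2) unfolding w'_def by simp
    ultimately obtain is' where is': "length is' = perm_inversions n w'" "set is' \<subseteq> {..<n}"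
      "w' = gen_word is'"
      using less.hyps by (metis less_add_one)
    have "gen_word (is' @ [i]) = w"
      unfolding gen_word_snoc is'(3)[symmetric] w'_def by (simp add: adj_trans_def fun_eq_iff)
    then show ?thesis
      using is' i(1) step by (intro exI[of _ "is' @ [i]"]) auto
  qed
qed

lemma word_length_eq_perm_inversions:
  assumes "w permutes {0..n}"
  shows "word_length n w = perm_inversions n w"
proof -
  let ?P = "\<lambda>k. \<exists>is. length is = k \<and> set is \<subseteq> {..<n} \<and> w = gen_word is"
  have ex: "?P (perm_inversions n w)" using reduced_word_exists[OF assms] .
  then have "word_length n w \<le> perm_inversions n w"
    unfolding word_length_def by (rule Least_le)
  moreover obtain js where "length js = word_length n w" "set js \<subseteq> {..<n}" "w = gen_word js"
    using LeastI_ex[of ?P] ex unfolding word_length_def by blast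
  then have "perm_inversions n w \<le> word_length n w"
    using perm_inversions_gen_word_le by metis
  ultimately show ?thesis by simp
qed

lemma des_eq_card:
  assumes "w permutes {0..n}"
  shows "des n w = card {i\<in>{..<n}. w (Suc i) < w i}"
proof -
  have "word_length n (w \<circ> adj_trans i) < word_length n w \<longleftrightarrow> w (Suc i) < w i" if "i < n" for i
  proof -
    have "w i \<noteq> w (Suc i)"
      using permutes_inj[OF assms] by (metis injD n_not_Suc_n)
    moreover have "w \<circ> adj_trans i permutes {0..n}"
      by (rule permutes_compose[OF adj_trans_permutes[OF that] assms])
    ultimately show ?thesis
      using perm_inversions_comp_adj_trans[OF that, of w]
      by (cases "w (Suc i) < w i") (auto simp: word_length_eq_perm_inversions assms)
  qed
  then show ?thesis unfolding des_def by (metis (lifting) lessThan_iff)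
qed

lemma precedes_conv_nth:
  "precedes L a b \<longleftrightarrow> (\<exists>j<length L. \<exists>i<j. L ! i = a \<and> L ! j = b)"
  by (induction L) (auto simp: Ex_less_Suc2 in_set_conv_nth)

lemma precedes_perm_list:
  assumes "w permutes {0..n}" "a < Suc n" "b < Suc n"
  shows "precedes (map w [0..<Suc n]) a b \<longleftrightarrow> inv w a < inv w b"
proof -
  have "precedes (map w [0..<Suc n]) a b \<longleftrightarrow> (\<exists>j<Suc n. \<exists>i<j. w i = a \<and> w j = b)"
    unfolding precedes_conv_nth by (auto simp del: upt_Suc) (use less_trans in fastforce)+
  also have "\<dots> \<longleftrightarrow> inv w a < inv w b"
  proof
    assume "\<exists>j<Suc n. \<exists>i<j. w i = a \<and> w j = b"
    then show "inv w a < inv w b"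
      using permutes_inverses(2)[OF assms(1)] by auto
  next
    assume "inv w a < inv w b"
    moreover have "inv w b < Suc n"
      using permutes_in_image[OF permutes_inv[OF assms(1)]] assms(3) by (auto simp: less_Suc_eq_le)
    ultimately show "\<exists>j<Suc n. \<exists>i<j. w i = a \<and> w j = b"
      using permutes_inverses(1)[OF assms(1)] by (intro exI[of _ "inv w b"]) auto
  qed
  finally show ?thesis .
qed

lemma des_eq_descents:
  assumes "w permutes {0..n}"
  shows "des n w = descents (map w [0..<Suc n])"
  unfolding des_eq_card[OF assms] descents_conv_sum
  by (simp add: Int_def del: upt_Suc)

lemma des_inv_eq_ides:
  assumes "w permutes {0..n}"
  shows "des n (inv w) = ides (map w [0..<Suc n])"
proof -
  have "ides (map w [0..<Suc n]) = (\<Sum>j<n. of_bool (inv w (Suc j) < inv w j))"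
    unfolding ides_def using precedes_perm_list[OF assms] by (intro sum.cong) auto
  then show ?thesis
    using des_eq_card[OF permutes_inv[OF assms]] by (simp add: Int_def)
qed

lemma inj_on_perm_list: "inj_on (\<lambda>w. map w [0..<Suc n]) {w. w permutes {0..n}}"
proof (rule inj_onI)
  fix w w' assume "w \<in> {w. w permutes {0..n}}" "w' \<in> {w. w permutes {0..n}}"
    and eq: "map w [0..<Suc n] = map w' [0..<Suc n]"
  then have "w k = w' k" for k
    using permutes_not_in[of w "{0..n}" k] permutes_not_in[of w' "{0..n}" k]
    by (cases "k < Suc n") (auto simp: map_eq_conv)
  then show "w = w'" by (simp add: fun_eq_iff)
qed

lemma perm_list_surj:
  assumes "L \<in> perm_lists (Suc n)"
  shows "L \<in> (\<lambda>w. map w [0..<Suc n]) ` {w. w permutes {0..n}}"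
proof -
  have len: "length L = Suc n" and d: "distinct L" and s: "set L = {0..<Suc n}"
    using assms by (auto simp: perm_lists_iff length_perm_lists)
  define w where "w i = (if i < Suc n then L ! i else i)" for i
  have "inj_on w {0..<Suc n}"
    unfolding w_def using d len by (auto simp: inj_on_def nth_eq_iff_index_eq)
  moreover have "w ` {0..<Suc n} = set L"
    unfolding w_def using len by (auto simp: set_conv_nth)
  ultimately have "bij_betw w {0..<Suc n} {0..<Suc n}"
    using s by (simp add: bij_betw_def)
  then have "w permutes {0..<Suc n}"
    by (rule bij_imp_permutes) (simp add: w_def)
  then have "w permutes {0..n}"
    by (simp add: atLeastLessThanSuc_atLeastAtMost)
  moreover have "map w [0..<Suc n] = L"
    using len by (intro nth_equalityI) (auto simp: w_def)
  ultimately show ?thesis by blast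
qed

lemma bij_betw_perm_list:
  "bij_betw (\<lambda>w. map w [0..<Suc n]) {w. w permutes {0..n}} (perm_lists (Suc n))"
  unfolding bij_betw_def using inj_on_perm_list perm_list_surj perm_list_distinct_set
  by (auto simp: perm_lists_iff)

lemma sum_perms_eq_sum_perm_lists:
  fixes F :: "nat \<Rightarrow> nat \<Rightarrow> real"
  shows "(\<Sum>w\<in>{w. w permutes {0..n}}. F (des n w) (des n (inv w)))
       = (\<Sum>L\<in>perm_lists (Suc n). F (descents L) (ides L))"
proof -
  have "(\<Sum>w\<in>{w. w permutes {0..n}}. F (des n w) (des n (inv w)))
      = (\<Sum>w\<in>{w. w permutes {0..n}}. F (descents (map w [0..<Suc n])) (ides (map w [0..<Suc n])))"
    by (intro sum.cong refl) (simp add: des_eq_descents des_inv_eq_ides)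
  also have "\<dots> = (\<Sum>L\<in>perm_lists (Suc n). F (descents L) (ides L))"
    by (rule sum.reindex_bij_betw[OF bij_betw_perm_list, of "\<lambda>L. F (descents L) (ides L)"])
  finally show ?thesis .
qed

lemma sum_perms_inv:
  fixes F :: "nat \<Rightarrow> nat \<Rightarrow> real"
  shows "(\<Sum>w\<in>{w. w permutes {0..n}}. F (des n w) (des n (inv w)))
       = (\<Sum>w\<in>{w. w permutes {0..n}}. F (des n (inv w)) (des n w))"
  by (rule sum.reindex_bij_witness[of _ inv inv]) (auto simp: permutes_inv permutes_inv_inv)

end

section \<open>The fourth central moment\<close>

text \<open>By the symmetry \<open>w \<mapsto> w\<^sup>-\<^sup>1\<close>, \<open>(des w + des w\<^sup>-\<^sup>1 - x)\<^sup>4\<close> may be replaced by the polynomial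
  \<open>quartic_b0 x a + quartic_b1 x a * b + quartic_b2 a * b\<^sup>2\<close> in \<open>a = des w\<close>, \<open>b = des w\<^sup>-\<^sup>1\<close>.\<close>

definition quartic_b0 :: "real \<Rightarrow> nat \<Rightarrow> real" where
  "quartic_b0 x d
     = 2 * real d ^ 4 - 8 * x * real d ^ 3 + 12 * x ^ 2 * real d ^ 2 - 8 * x ^ 3 * real d + x ^ 4"

definition quartic_b1 :: "real \<Rightarrow> nat \<Rightarrow> real" where
  "quartic_b1 x d = 8 * real d ^ 3 - 24 * x * real d ^ 2 + 12 * x ^ 2 * real d"

definition quartic_b2 :: "nat \<Rightarrow> real" where
  "quartic_b2 d = 6 * real d ^ 2"

lemma power4_symmetrize:
  "(real a + real b - x) ^ 4
   = (quartic_b0 x a + quartic_b1 x a * real b + quartic_b2 a * real b ^ 2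
      + (quartic_b0 x b + quartic_b1 x b * real a + quartic_b2 b * real a ^ 2)) / 2"
  by (simp add: quartic_b0_def quartic_b1_def quartic_b2_def field_simps eval_nat_numeral)

lemma sum_quartic_parts:
  assumes "3 \<le> n"
  shows "(\<Sum>L\<in>perm_lists (Suc n). quartic_b0 (real n) (descents L)
            + quartic_b1 (real n) (descents L) * real (ides L)
            + quartic_b2 (descents L) * real (ides L) ^ 2)
    = fact (n - 1) * ((real n + 1) * real n * (5 * real n ^ 2 + 79 * real n + 258) / 60
                      - (5 * real n + 2))"
proof -
  let ?x = "real n"
  let ?y = "real (Suc n)"
  have b0: "des_sum (Suc n) (quartic_b0 ?x)
      = fact (Suc n) * (?x ^ 4 + (- 8 * ?x ^ 3) * des_moment1 ?y
      + (12 * ?x ^ 2) * des_moment2 ?y + (- 8 * ?x) * des_moment3 ?y + 2 * des_moment4 ?y)"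
    using assms by (intro des_sum_quartic) (auto simp: quartic_b0_def algebra_simps)
  have b1: "des_sum (Suc n) (quartic_b1 ?x) = fact (Suc n) * (0 + (12 * ?x ^ 2) * des_moment1 ?y
      + (- 24 * ?x) * des_moment2 ?y + 8 * des_moment3 ?y + 0 * des_moment4 ?y)"
    using assms by (intro des_sum_quartic) (auto simp: quartic_b1_def algebra_simps)
  have db1: "des_sum n (fdiff (quartic_b1 ?x)) = fact n * ((8 - 24 * ?x + 12 * ?x ^ 2)
      + (24 - 48 * ?x) * des_moment1 ?x + 24 * des_moment2 ?x)"
    using assms by (intro des_sum_quadratic)
      (auto simp: fdiff_def quartic_b1_def algebra_simps power2_eq_square power3_eq_cube)
  have b2: "des_sum (Suc n) quartic_b2 = fact (Suc n) * (0 + 0 * des_moment1 ?y + 6 * des_moment2 ?y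
      + 0 * des_moment3 ?y + 0 * des_moment4 ?y)"
    using assms by (intro des_sum_quartic) (auto simp: quartic_b2_def)
  have db2: "des_sum n (fdiff quartic_b2) = fact n * (6 + 12 * des_moment1 ?x + 0 * des_moment2 ?x)"
    using assms by (intro des_sum_quadratic)
      (auto simp: fdiff_def quartic_b2_def algebra_simps power2_eq_square)
  have "fdiff (fdiff quartic_b2) = (\<lambda>_. 12)"
    by (simp add: fun_eq_iff fdiff_def quartic_b2_def algebra_simps power2_eq_square)
  then have ddb2: "des_sum (n - 1) (fdiff (fdiff quartic_b2)) = 12 * fact (n - 1)"
    by (simp add: des_sum_const)
  have sq: "(\<Sum>L\<in>perm_lists (Suc n). quartic_b2 (descents L) * real (ides L) ^ 2)
    = ?x * ((des_sum (Suc n) quartic_b2 + des_sum n (fdiff quartic_b2)) / 2)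
      + 2 * (?x - 1) * ((des_sum (Suc n) quartic_b2 + 3 * des_sum n (fdiff quartic_b2)
                       + 2 * des_sum (n - 1) (fdiff (fdiff quartic_b2))) / 6)
      + (?x - 1) * (?x - 2) * ((des_sum (Suc n) quartic_b2 + 2 * des_sum n (fdiff quartic_b2)
                                  + des_sum (n - 1) (fdiff (fdiff quartic_b2))) / 4)"
    using sum_des_ides_sq[of "n - 1" quartic_b2] assms
    by (simp add: of_nat_diff Suc_diff_Suc numeral_2_eq_2)
  have facts: "fact (Suc n) = (?x + 1) * ?x * fact (n - 1)" "fact n = ?x * fact (n - 1)"
    using assms by (simp_all add: fact_reduce algebra_simps)
  have y: "real (Suc n) = ?x + 1" by simp
  show ?thesis
    unfolding sum.distrib des_sum_def[symmetric] sum_des_ides sq b0 b1 db1 b2 db2 ddb2 facts y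
    by (simp add: des_moment_defs field_simps eval_nat_numeral)
qed

lemma expectation_unif_A:
  fixes f :: "(nat \<Rightarrow> nat) \<Rightarrow> real"
  shows "measure_pmf.expectation (unif_A n) f = (\<Sum>w | w permutes {0..n}. f w) / fact (Suc n)"
proof -
  have ne: "{w. w permutes {0..n}} \<noteq> {}" and fin: "finite {w. w permutes {0..n}}"
    using finite_permutations permutes_id by blast+
  have "real (card {w. w permutes {0..n}}) = fact (Suc n)"
    by (simp add: card_permutations del: fact_Suc)
  then show ?thesis
    unfolding unif_A_def integral_pmf_of_set[OF ne fin] by simp
qed

lemma sum_T_stat:
  assumes "2 \<le> n"
  shows "(\<Sum>w | w permutes {0..n}. T_stat n w) = real n * fact (Suc n)"
proof -
  have "des_sum (Suc n) real
      = fact (Suc n) * (0 + 1 * des_moment1 (real (Suc n)) + 0 * des_moment2 (real (Suc n)))"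
    using assms by (intro des_sum_quadratic) auto
  moreover have "(\<Sum>L\<in>perm_lists (Suc n). real (ides L)) = real n * fact (Suc n) / 2"
  proof -
    have "fdiff (\<lambda>_. 1) = (\<lambda>_. 0)" by (simp add: fdiff_def fun_eq_iff)
    then show ?thesis using sum_des_ides[of "\<lambda>_. 1" n] by (simp add: des_sum_const)
  qed
  ultimately show ?thesis
    unfolding T_stat_def of_nat_add sum_perms_eq_sum_perm_lists[of "\<lambda>a b. real a + real b"]
    by (simp add: sum.distrib des_sum_def des_moment1_def field_simps)
qed

lemma sum_T_stat_central_power4:
  assumes "3 \<le> n"
  shows "(\<Sum>w | w permutes {0..n}. (T_stat n w - real n) ^ 4)
    = fact (n - 1) * ((real n + 1) * real n * (5 * real n ^ 2 + 79 * real n + 258) / 60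
                      - (5 * real n + 2))"
proof -
  define q where
    "q a b = quartic_b0 (real n) a + quartic_b1 (real n) a * real b + quartic_b2 a * real b ^ 2"
    for a b
  have symm:
    "(T_stat n w - real n) ^ 4 = (q (des n w) (des n (inv w)) + q (des n (inv w)) (des n w)) / 2"
    for w unfolding T_stat_def of_nat_add q_def by (rule power4_symmetrize)
  have "(\<Sum>w | w permutes {0..n}. (T_stat n w - real n) ^ 4)
      = ((\<Sum>w | w permutes {0..n}. q (des n w) (des n (inv w)))
         + (\<Sum>w | w permutes {0..n}. q (des n (inv w)) (des n w))) / 2"
    unfolding symm sum_divide_distrib[symmetric] sum.distrib ..
  also have "\<dots> = (\<Sum>L\<in>perm_lists (Suc n). q (descents L) (ides L))"
    unfolding sum_perms_inv[of q n, symmetric] sum_perms_eq_sum_perm_lists by simp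
  finally show ?thesis
    using sum_quartic_parts[OF assms] by (simp add: q_def)
qed

lemma expectation_T_stat_central_power4:
  assumes "3 \<le> n"
  shows "measure_pmf.expectation (unif_A n) (\<lambda>w. (T_stat n w - real n) ^ 4)
         = (5 * real n ^ 2 + 79 * real n + 258) / 60 - (5 * real n + 2) / (real n * (real n + 1))"
proof -
  have "fact (Suc n) = (real n + 1) * real n * fact (n - 1)"
    using assms by (simp add: fact_reduce algebra_simps)
  then have "measure_pmf.expectation (unif_A n) (\<lambda>w. (T_stat n w - real n) ^ 4)
      = fact (n - 1) * ((real n + 1) * real n * (5 * real n ^ 2 + 79 * real n + 258) / 60
                        - (5 * real n + 2)) / ((real n + 1) * real n * fact (n - 1))"
    by (simp only: expectation_unif_A sum_T_stat_central_power4[OF assms])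
  also have "\<dots> = ((real n + 1) * real n * (5 * real n ^ 2 + 79 * real n + 258) / 60
                    - (5 * real n + 2)) / ((real n + 1) * real n)"
    by simp
  also have "\<dots>
      = (5 * real n ^ 2 + 79 * real n + 258) / 60 - (5 * real n + 2) / (real n * (real n + 1))"
  proof -
    have "(c * x * P / 60 - R) / (c * x) = P / 60 - R / (x * c)"
      if "c \<noteq> 0" "x \<noteq> 0" for c x P R :: real
      using that by (simp add: field_simps)
    moreover have "real n \<noteq> 0" "real n + 1 \<noteq> 0" using assms by linarith+
    ultimately show ?thesis by blast
  qed
  finally show ?thesis .
qed

theorem proposition3p6:
  fixes n :: nat
  assumes "n \<ge> 3"
  shows "measure_pmf.expectation (unif_A n)
           (\<lambda>w. (T_stat n w - measure_pmf.expectation (unif_A n) (T_stat n)) ^ 4)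
         = (5 * real n ^ 2 + 79 * real n + 258) / 60 - (5 * real n + 2) / (real n * (real n + 1))"
proof -
  have "measure_pmf.expectation (unif_A n) (T_stat n) = real n"
    using sum_T_stat assms by (simp add: expectation_unif_A)
  then show ?thesis
    using expectation_T_stat_central_power4[OF assms] by simp
qed

end
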